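(* Let $p\ge2$ be an integer, $R\ge1$, $A\in GL_r(\mathbb{C}((z)))$, $C,C'\in I+z^RM_r(\mathbb{C}[[z]])$ and $A_0,A_0'\in GL_r(\mathbb{C})$ with $$A_0=C(z/p)^{-1}A(z)C(z),\qquad A_0'=C'(z/p)^{-1}A(z)C'(z).$$ Then $A_0=A_0'$. If for no integer $i\ge R$ is $p^i$ an eigenvalue of the linear map $X\mapsto A_0^{-1}XA_0$ on $M_r(\mathbb{C})$, then $C=C'$. This last condition holds with $R=1$ if $A_0$ is $p$-restricted.
   Context: $A_0$ is $p$-restricted if all its eigenvalues $c$ satisfy $1\le|c|<p$. *)

theory Defs
  imports "HOL-Analysis.Analysis" "HOL-Computational_Algebra.Formal_Laurent_Series"
begin

definition mat_map :: "('a \<Rightarrow> 'b) \<Rightarrow> 'a^'n^'m \<Rightarrow> 'b^'n^'m" where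
  "mat_map f M = (\<chi> i j. f (M $ i $ j))"

(* substitution z \<mapsto> c z in a formal power series: f(cz) *)
definition fps_scale :: "complex \<Rightarrow> complex fps \<Rightarrow> complex fps" where
  "fps_scale c f = Abs_fps (\<lambda>n. c ^ n * fps_nth f n)"

definition in_I_plus_zR :: "nat \<Rightarrow> complex fps^'n^'n \<Rightarrow> bool" where
  "in_I_plus_zR R C \<longleftrightarrow> (\<forall>i j. \<forall>k<R. fps_nth ((C - mat 1) $ i $ j) k = 0)"

definition conj_map_eigenvalue :: "complex^'n^'n \<Rightarrow> complex \<Rightarrow> bool" where
  "conj_map_eigenvalue A0 c \<longleftrightarrow>
     (\<exists>X::complex^'n^'n. X \<noteq> 0 \<and> matrix_inv A0 ** X ** A0 = (\<chi> i j. c * X $ i $ j))"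

definition mat_eigenvalue :: "complex^'n^'n \<Rightarrow> complex \<Rightarrow> bool" where
  "mat_eigenvalue M c \<longleftrightarrow> (\<exists>v. v \<noteq> 0 \<and> M *v v = c *s v)"

definition p_restricted :: "nat \<Rightarrow> complex^'n^'n \<Rightarrow> bool" where
  "p_restricted p M \<longleftrightarrow> (\<forall>c. mat_eigenvalue M c \<longrightarrow> 1 \<le> cmod c \<and> cmod c < real p)"

end

theory Submission
  imports Defs "HOL-Computational_Algebra.Fundamental_Theorem_Algebra"
begin

(*
  Since C and C' are invertible power series matrices, D = C'^-1 C is a power series matrix
  with constant term I, and the two gauge equations combine to D(z/p) A0 = A0' D(z).
  Comparing coefficients of z^n gives p^-n D_n A0 = A0' D_n: for n = 0 this is A0 = A0',
  and for n > 0 it says that a nonzero D_n is an eigenvector of X |-> A0^-1 X A0 for p^n.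
  As C = C' = I mod z^R, also D = I mod z^R, so under the eigenvalue hypothesis D = I.

  If A0^-1 X A0 = c X, then X A0 = (c A0) X. For p-restricted A0 and |c| >= p the spectra
  of A0 and c A0 are disjoint, which forces X = 0 (Sylvester): if f is an annihilating
  polynomial of A0 of minimal degree, all its roots are eigenvalues of A0, so every
  linear factor of f(c A0) is injective, while f(c A0) X = X f(A0) = 0.
*)

section \<open>Matrices over rings\<close>

lemma mat_map_nth [simp]: "mat_map f M $ i $ j = f (M $ i $ j)"
  by (simp add: mat_map_def)

lemma mat_map_mat_map: "mat_map f (mat_map g M) = mat_map (\<lambda>x. f (g x)) M"
  by (simp add: vec_eq_iff)

lemma mat_mult_left: "mat a ** M = (\<chi> i j. a * M $ i $ j)" for M :: "'a::semiring_1^'n^'m"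
  by (simp add: mat_def matrix_matrix_mult_def vec_eq_iff if_distrib if_distribR sum.delta
      cong: if_cong)

lemma mat_mult_comm: "mat a ** M = M ** mat a" for M :: "'a::comm_semiring_1^'n^'m"
  by (simp add: mat_def matrix_matrix_mult_def vec_eq_iff if_distrib if_distribR sum.delta
      sum.delta' mult.commute cong: if_cong)

lemma matrix_mult_mat_commute: "A ** (mat a ** B) = mat a ** (A ** B)"
  for A B :: "'a::comm_semiring_1^'n^'n"
  by (metis matrix_mul_assoc mat_mult_comm)

lemma mat_mult_mat: "mat a ** mat b = (mat (a * b) :: 'a::semiring_1^'n^'n)"
  unfolding mat_mult_left by (simp add: mat_def vec_eq_iff)

lemma mat_add: "mat (a + b) = (mat a + mat b :: 'a::monoid_add^'n^'n)"
  by (simp add: mat_def vec_eq_iff)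

lemma matrix_mult_add_rdistrib: "(A + B) ** C = A ** C + B ** C"
  for A B :: "'a::semiring_1^'n^'m" and C :: "'a^'p^'n"
  by (simp add: matrix_matrix_mult_def vec_eq_iff sum.distrib distrib_right)

lemma matrix_mult_uminus_right: "A ** (- B) = - (A ** B)" for A B :: "'a::ring_1^'n^'n"
  by (simp add: matrix_matrix_mult_def vec_eq_iff sum_negf)

lemma matrix_inv_right: "invertible A \<Longrightarrow> A ** matrix_inv A = mat 1"
  and matrix_inv_left: "invertible A \<Longrightarrow> matrix_inv A ** A = mat 1"
  for A :: "'a::semiring_1^'n^'n"
  using someI_ex[of "\<lambda>B. A ** B = mat 1 \<and> B ** A = mat 1"]
  by (auto simp: invertible_def matrix_inv_def)

lemma matrix_inv_unique:
  fixes A :: "'a::semiring_1^'n^'n"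
  assumes "A ** B = mat 1" "B ** A = mat 1"
  shows "matrix_inv A = B"
proof -
  have "invertible A" using assms invertible_def by blast
  then have "matrix_inv A = matrix_inv A ** (A ** B)" by (simp add: assms)
  also have "\<dots> = B" by (simp add: matrix_mul_assoc matrix_inv_left \<open>invertible A\<close>)
  finally show ?thesis .
qed

lemma invertible_iff_one_sided_inverses:
  fixes A :: "'a::semiring_1^'n^'n"
  shows "invertible A \<longleftrightarrow> (\<exists>B. A ** B = mat 1) \<and> (\<exists>L. L ** A = mat 1)"
proof safe
  fix B L assume "A ** B = mat 1" "L ** A = mat 1"
  then have "L = B" by (metis matrix_mul_assoc matrix_mul_lid matrix_mul_rid)
  with \<open>A ** B = mat 1\<close> \<open>L ** A = mat 1\<close> show "invertible A" by (auto simp: invertible_def)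
qed (auto simp: invertible_def)

lemma invertible_transpose:
  fixes A :: "'a::comm_semiring_1^'n^'n"
  shows "invertible A \<Longrightarrow> invertible (transpose A)"
  by (metis invertible_def matrix_transpose_mul transpose_mat)

locale ring_1_hom =
  fixes hom :: "'a::ring_1 \<Rightarrow> 'b::ring_1"
  assumes hom_add: "hom (x + y) = hom x + hom y"
    and hom_mult: "hom (x * y) = hom x * hom y"
    and hom_one: "hom 1 = 1"
begin

lemma hom_zero: "hom 0 = 0"
  using hom_add[of 0 0] by simp

lemma hom_sum: "hom (sum f S) = (\<Sum>x\<in>S. hom (f x))"
  by (rule sum_comp_morphism[of hom, OF hom_zero hom_add, symmetric, unfolded o_def])

lemma mat_map_mult: "mat_map hom (M ** N) = mat_map hom M ** mat_map hom N"
  by (simp add: matrix_matrix_mult_def vec_eq_iff hom_sum hom_mult)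

lemma mat_map_mat: "mat_map hom (mat a) = mat (hom a)"
  by (simp add: mat_def vec_eq_iff hom_zero)

lemma mat_map_matrix_inv:
  fixes M :: "'a^'n^'n"
  assumes "invertible M"
  shows "invertible (mat_map hom M)" "matrix_inv (mat_map hom M) = mat_map hom (matrix_inv M)"
proof -
  have "mat_map hom M ** mat_map hom (matrix_inv M) = mat 1"
    "mat_map hom (matrix_inv M) ** mat_map hom M = mat 1"
    by (simp_all flip: mat_map_mult add: matrix_inv_left[OF assms] matrix_inv_right[OF assms]
        mat_map_mat hom_one)
  then show "invertible (mat_map hom M)" "matrix_inv (mat_map hom M) = mat_map hom (matrix_inv M)"
    by (auto simp: invertible_def intro: matrix_inv_unique)
qed

end

section \<open>Matrices of formal power series\<close>

lemma fps_scale_conv_compose: "fps_scale c f = f oo (fps_const c * fps_X)"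
  by (simp add: fps_scale_def fps_compose_linear)

interpretation fps_scale: ring_1_hom "fps_scale c"
  by unfold_locales (simp_all add: fps_scale_conv_compose fps_compose_add_distrib
      fps_compose_mult_distrib)

interpretation fps_to_fls: ring_1_hom "fps_to_fls :: 'a::comm_ring_1 fps \<Rightarrow> 'a fls"
  by unfold_locales (simp_all add: fls_times_fps_to_fls)

interpretation fps_scale_to_fls: ring_1_hom "\<lambda>f. fps_to_fls (fps_scale c f)"
  by unfold_locales (simp_all add: fps_scale.hom_add fps_scale.hom_mult fps_scale.hom_one
      fls_times_fps_to_fls)

definition mat_coeff :: "nat \<Rightarrow> 'a::zero fps^'n^'m \<Rightarrow> 'a^'n^'m" where
  "mat_coeff k M = (\<chi> i j. fps_nth (M $ i $ j) k)"

definition fps_matrix :: "(nat \<Rightarrow> 'a::zero^'n^'m) \<Rightarrow> 'a fps^'n^'m" where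
  "fps_matrix F = (\<chi> i j. Abs_fps (\<lambda>k. F k $ i $ j))"

lemma mat_coeff_fps_matrix [simp]: "mat_coeff k (fps_matrix F) = F k"
  by (simp add: mat_coeff_def fps_matrix_def vec_eq_iff)

lemma fps_matrix_eqI: "(\<And>k. mat_coeff k M = mat_coeff k N) \<Longrightarrow> M = N"
  by (simp add: mat_coeff_def vec_eq_iff fps_eq_iff)

lemma mat_coeff_mult:
  "mat_coeff n (M ** N) = (\<Sum>k\<le>n. mat_coeff k M ** mat_coeff (n - k) N)"
  for M :: "'a::comm_semiring_1 fps^'n^'m" and N :: "'a fps^'p^'n"
  unfolding mat_coeff_def matrix_matrix_mult_def
  by (simp add: vec_eq_iff fps_sum_nth fps_mult_nth atLeast0AtMost sum_distrib_left
      sum.swap[of _ UNIV])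

lemma mat_coeff_mat: "mat_coeff k (mat a) = mat (fps_nth a k)"
  by (simp add: mat_coeff_def mat_def vec_eq_iff)

lemma mat_coeff_diff: "mat_coeff k (M - N) = mat_coeff k M - mat_coeff k N"
  by (simp add: mat_coeff_def vec_eq_iff)

lemma mat_coeff_transpose: "mat_coeff k (transpose M) = transpose (mat_coeff k M)"
  by (simp add: mat_coeff_def transpose_def)

lemma mat_coeff_const_mult: "mat_coeff n (mat_map fps_const A ** M) = A ** mat_coeff n M"
  by (simp add: mat_coeff_def matrix_matrix_mult_def vec_eq_iff fps_sum_nth)

lemma mat_coeff_mult_const: "mat_coeff n (M ** mat_map fps_const A) = mat_coeff n M ** A"
  by (simp add: mat_coeff_def matrix_matrix_mult_def vec_eq_iff fps_sum_nth)

lemma mat_coeff_fps_scale: "mat_coeff n (mat_map (fps_scale c) M) = mat (c ^ n) ** mat_coeff n M"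
  by (simp add: mat_coeff_def fps_scale_def mat_mult_left)

(* B_n is solved from the coefficient equations sum_{k <= n} M_k B_(n-k) = 0 for n > 0. *)
fun right_inverse_coeff :: "'a::comm_ring_1 fps^'n^'n \<Rightarrow> nat \<Rightarrow> 'a^'n^'n" where
  "right_inverse_coeff M 0 = matrix_inv (mat_coeff 0 M)"
| "right_inverse_coeff M (Suc n) = - (matrix_inv (mat_coeff 0 M) **
     (\<Sum>k\<le>n. mat_coeff (Suc k) M ** right_inverse_coeff M (n - k)))"

lemma fps_matrix_right_inverse:
  fixes M :: "'a::comm_ring_1 fps^'n^'n"
  assumes M0: "invertible (mat_coeff 0 M)"
  shows "M ** fps_matrix (right_inverse_coeff M) = mat 1"
proof (rule fps_matrix_eqI)
  fix n
  show "mat_coeff n (M ** fps_matrix (right_inverse_coeff M)) = mat_coeff n (mat 1)"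
  proof (cases n)
    case 0
    then show ?thesis by (simp add: mat_coeff_mult mat_coeff_mat matrix_inv_right[OF M0])
  next
    case (Suc m)
    let ?S = "\<Sum>k\<le>m. mat_coeff (Suc k) M ** right_inverse_coeff M (m - k)"
    have "mat_coeff n (M ** fps_matrix (right_inverse_coeff M))
        = mat_coeff 0 M ** right_inverse_coeff M (Suc m) + ?S"
      unfolding Suc mat_coeff_mult by (subst sum.atMost_Suc_shift) simp
    also have "\<dots> = 0"
      by (simp add: matrix_mult_uminus_right matrix_mul_assoc matrix_inv_right[OF M0])
    finally show ?thesis by (simp add: Suc mat_coeff_mat)
  qed
qed

lemma invertible_fps_matrix:
  fixes M :: "'a::comm_ring_1 fps^'n^'n"
  assumes "invertible (mat_coeff 0 M)"
  shows "invertible M"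
proof -
  (* a left inverse is the transpose of a right inverse of the transpose *)
  have "invertible (mat_coeff 0 (transpose M))"
    using assms by (simp add: mat_coeff_transpose invertible_transpose)
  then have "\<exists>B. transpose M ** B = mat 1"
    using fps_matrix_right_inverse by blast
  then have "\<exists>L. L ** M = mat 1"
    by (simp add: right_invertible_transpose)
  moreover have "\<exists>B. M ** B = mat 1"
    using fps_matrix_right_inverse[OF assms] by blast
  ultimately show ?thesis
    by (simp add: invertible_iff_one_sided_inverses)
qed

lemma in_I_plus_zR_mat_coeff:
  assumes "in_I_plus_zR R C" "k < R"
  shows "mat_coeff k C = mat_coeff k (mat 1)"
proof -
  have "mat_coeff k (C - mat 1) = 0"
    using assms unfolding in_I_plus_zR_def mat_coeff_def by (simp add: vec_eq_iff)
  then show ?thesis by (simp add: mat_coeff_diff)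
qed

lemma in_I_plus_zR_mat_coeff_mult:
  assumes "in_I_plus_zR R C" "n < R"
  shows "mat_coeff n (C ** D) = mat_coeff n D"
proof -
  have "mat_coeff n (C ** D) = mat_coeff n (mat 1 ** D)"
    unfolding mat_coeff_mult
    by (intro sum.cong refl) (use assms in \<open>simp add: in_I_plus_zR_mat_coeff\<close>)
  then show ?thesis by simp
qed

lemma in_I_plus_zR_invertible:
  assumes "in_I_plus_zR R C" "R \<ge> 1"
  shows "invertible C"
proof -
  have "mat_coeff 0 C = mat 1"
    using in_I_plus_zR_mat_coeff[OF assms(1), of 0] assms(2) by (simp add: mat_coeff_mat)
  then show ?thesis
    by (intro invertible_fps_matrix) (auto simp: invertible_def)
qed

section \<open>Uniqueness of the gauge transformation\<close>

lemma gauge_equation_fls_imp_fps: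
  fixes C :: "complex fps^'n^'n" and A :: "complex fls^'n^'n"
  assumes C: "invertible C"
    and gauge: "mat_map fls_const A0 =
      matrix_inv (mat_map (\<lambda>f. fps_to_fls (fps_scale c f)) C) ** A ** mat_map fps_to_fls C"
  shows "A = mat_map fps_to_fls (mat_map (fps_scale c) C ** mat_map fps_const A0 ** matrix_inv C)"
proof -
  let ?H = "mat_map (\<lambda>f. fps_to_fls (fps_scale c f)) C" and ?T = "mat_map fps_to_fls C"
  have "A = (?H ** matrix_inv ?H) ** A ** (?T ** matrix_inv ?T)"
    using fps_scale_to_fls.mat_map_matrix_inv(1)[OF C] fps_to_fls.mat_map_matrix_inv(1)[OF C]
    by (simp add: matrix_inv_right)
  also have "\<dots> = ?H ** (matrix_inv ?H ** A ** ?T) ** matrix_inv ?T"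
    by (simp add: matrix_mul_assoc)
  also have "\<dots> = ?H ** mat_map fls_const A0 ** matrix_inv ?T"
    by (simp add: gauge)
  also have "\<dots> = mat_map fps_to_fls (mat_map (fps_scale c) C ** mat_map fps_const A0 ** matrix_inv C)"
    by (simp add: fps_to_fls.mat_map_mult fps_to_fls.mat_map_matrix_inv(2)[OF C] mat_map_mat_map)
  finally show ?thesis .
qed

lemma gauge_quotient_twisted_commute:
  fixes C C' :: "'a::ring_1^'n^'n" and hom :: "'a \<Rightarrow> 'a"
  assumes "ring_1_hom hom" and C: "invertible C" and C': "invertible C'"
    and gauge: "mat_map hom C ** K ** matrix_inv C = mat_map hom C' ** K' ** matrix_inv C'"
  shows "mat_map hom (matrix_inv C' ** C) ** K = K' ** (matrix_inv C' ** C)"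
proof -
  interpret ring_1_hom hom by fact
  have cancel: "mat_map hom (matrix_inv C') ** (mat_map hom C' ** X) = X" for X
    by (simp add: matrix_mul_assoc flip: mat_map_mult)
      (simp add: matrix_inv_left[OF C'] mat_map_mat hom_one)
  have "mat_map hom (matrix_inv C' ** C) ** K
      = mat_map hom (matrix_inv C') ** (mat_map hom C ** K ** matrix_inv C) ** C"
    by (simp add: mat_map_mult matrix_inv_left[OF C] flip: matrix_mul_assoc)
  also have "\<dots> = mat_map hom (matrix_inv C') ** (mat_map hom C' ** K' ** matrix_inv C') ** C"
    by (simp add: gauge)
  also have "\<dots> = K' ** (matrix_inv C' ** C)"
    by (simp add: cancel flip: matrix_mul_assoc)
  finally show ?thesis .
qed

lemma conj_map_eigenvalueI:
  fixes A0 X :: "complex^'n^'n"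
  assumes A0: "invertible A0" and "X \<noteq> 0" and eq: "mat a ** X ** A0 = A0 ** X"
  shows "conj_map_eigenvalue A0 (inverse a)"
proof -
  have X: "X = matrix_inv A0 ** (A0 ** X)"
    by (simp add: matrix_mul_assoc matrix_inv_left[OF A0])
  then have "a \<noteq> 0"
    using eq \<open>X \<noteq> 0\<close> by auto
  have "mat a ** (matrix_inv A0 ** X ** A0) = matrix_inv A0 ** (mat a ** X ** A0)"
    by (simp flip: matrix_mult_mat_commute matrix_mul_assoc)
  also have "\<dots> = X"
    using X by (simp add: eq)
  finally have "mat a ** (matrix_inv A0 ** X ** A0) = X" .
  then have "mat (inverse a) ** (mat a ** (matrix_inv A0 ** X ** A0)) = mat (inverse a) ** X"
    by simp
  then have "matrix_inv A0 ** X ** A0 = mat (inverse a) ** X"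
    using \<open>a \<noteq> 0\<close> by (simp add: matrix_mul_assoc mat_mult_mat)
  then show ?thesis
    using \<open>X \<noteq> 0\<close> unfolding conj_map_eigenvalue_def mat_mult_left by blast
qed

lemma mat_coeff_twisted_commute:
  fixes D :: "complex fps^'n^'n"
  assumes "mat_map (fps_scale c) D ** mat_map fps_const A0 = mat_map fps_const A0' ** D"
  shows "mat (c ^ n) ** mat_coeff n D ** A0 = A0' ** mat_coeff n D"
  using arg_cong[OF assms, of "mat_coeff n"]
  by (simp add: mat_coeff_mult_const mat_coeff_const_mult mat_coeff_fps_scale)

lemma gauge_transform_unique:
  fixes p R :: nat and C C' :: "complex fps^'n^'n" and A0 A0' :: "complex^'n^'n"
  defines "S \<equiv> mat_map (fps_scale (1 / of_nat p))"
  assumes "R \<ge> 1" and C: "in_I_plus_zR R C" and C': "in_I_plus_zR R C'" and A0: "invertible A0"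
    and gauge: "S C ** mat_map fps_const A0 ** matrix_inv C
      = S C' ** mat_map fps_const A0' ** matrix_inv C'"
  shows "A0 = A0'"
    and "(\<forall>i\<ge>R. \<not> conj_map_eigenvalue A0 (of_nat p ^ i)) \<Longrightarrow> C = C'"
proof -
  have invC: "invertible C" and invC': "invertible C'"
    using in_I_plus_zR_invertible C C' \<open>R \<ge> 1\<close> by blast+
  define D where "D = matrix_inv C' ** C"
  have C'D: "C' ** D = C"
    by (simp add: D_def matrix_mul_assoc matrix_inv_right[OF invC'])
  have D_low: "mat_coeff n D = mat_coeff n (mat 1)" if "n < R" for n
    using in_I_plus_zR_mat_coeff_mult[OF C' that, of D] in_I_plus_zR_mat_coeff[OF C that]
    by (simp add: C'D)
  have twisted: "mat ((1 / of_nat p) ^ n) ** mat_coeff n D ** A0 = A0' ** mat_coeff n D" for n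
    unfolding D_def
    by (intro mat_coeff_twisted_commute
        gauge_quotient_twisted_commute[OF fps_scale.ring_1_hom_axioms invC invC' gauge[unfolded S_def]])
  show "A0 = A0'"
    using twisted[of 0] D_low[of 0] \<open>R \<ge> 1\<close> by (simp add: mat_coeff_mat)
  assume no_eigenvalue: "\<forall>i\<ge>R. \<not> conj_map_eigenvalue A0 (of_nat p ^ i)"
  have "mat_coeff n D = mat_coeff n (mat 1)" for n
  proof (cases "n < R")
    case False
    have "mat_coeff n D = 0"
    proof (rule ccontr)
      assume "mat_coeff n D \<noteq> 0"
      then have "conj_map_eigenvalue A0 (inverse ((1 / of_nat p) ^ n))"
        using conj_map_eigenvalueI[OF A0] twisted[of n] \<open>A0 = A0'\<close> by blast
      then show False
        using no_eigenvalue False by (simp add: power_inverse divide_inverse)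
    qed
    then show ?thesis
      using False \<open>R \<ge> 1\<close> by (simp add: mat_coeff_mat)
  qed (rule D_low)
  then have "D = mat 1"
    by (simp add: fps_matrix_eqI)
  then show "C = C'"
    using C'D by simp
qed

section \<open>Sylvester's theorem on intertwiners\<close>

definition poly_mat :: "'a::comm_ring_1 poly \<Rightarrow> 'a^'n^'n \<Rightarrow> 'a^'n^'n" where
  "poly_mat f M = foldr (\<lambda>a N. mat a + M ** N) (coeffs f) 0"

lemma poly_mat_0 [simp]: "poly_mat 0 M = 0"
  by (simp add: poly_mat_def)

lemma poly_mat_pCons: "poly_mat (pCons a f) M = mat a + M ** poly_mat f M"
  by (auto simp: poly_mat_def cCons_def)

lemma poly_mat_const: "poly_mat [:a:] M = mat a"
  by (simp add: poly_mat_pCons)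

lemma poly_mat_add: "poly_mat (f + g) M = poly_mat f M + poly_mat g M"
proof (induction f arbitrary: g)
  case (pCons a f)
  obtain b h where g: "g = pCons b h" by (cases g)
  show ?case
    using pCons.IH[of h] by (simp add: g poly_mat_pCons mat_add matrix_add_ldistrib algebra_simps)
qed simp

lemma poly_mat_smult: "poly_mat (smult a f) M = mat a ** poly_mat f M"
  by (induction f) (simp_all add: poly_mat_pCons matrix_add_ldistrib matrix_mult_mat_commute
      mat_mult_mat)

lemma poly_mat_mult: "poly_mat (f * g) M = poly_mat f M ** poly_mat g M"
  by (induction f) (simp_all add: poly_mat_add poly_mat_smult poly_mat_pCons
      matrix_mult_add_rdistrib matrix_mul_assoc)

lemma poly_mat_monom: "poly_mat (monom a k) M = mat a ** (((**) M) ^^ k) (mat 1)"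
  by (induction k) (simp_all add: monom_0 monom_Suc poly_mat_const poly_mat_pCons
      matrix_mult_mat_commute)

lemma poly_mat_sum: "poly_mat (\<Sum>k\<in>S. f k) M = (\<Sum>k\<in>S. poly_mat (f k) M)"
  by (induction S rule: infinite_finite_induct) (simp_all add: poly_mat_add)

lemma poly_mat_intertwine:
  assumes "X ** A = B ** X"
  shows "X ** poly_mat f A = poly_mat f B ** X"
proof (induction f)
  case (pCons a f)
  have "X ** (A ** poly_mat f A) = B ** (poly_mat f B ** X)"
    by (metis assms matrix_mul_assoc pCons.IH)
  then show ?case
    by (simp add: poly_mat_pCons matrix_add_ldistrib matrix_mult_add_rdistrib matrix_mul_assoc
        flip: mat_mult_comm)
qed simp

lemma mat_of_real_mult: "mat (of_real t) ** M = t *\<^sub>R M" for M :: "complex^'n^'n"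
  by (simp add: mat_mult_left vec_eq_iff) (simp add: scaleR_conv_of_real)

lemma poly_mat_annihilator_exists: "\<exists>f. f \<noteq> 0 \<and> poly_mat f (M :: complex^'n^'n) = 0"
proof (cases "inj_on (\<lambda>k. (((**) M) ^^ k) (mat 1)) {..DIM(complex^'n^'n)}")
  case True
  define N where "N = DIM(complex^'n^'n)"
  define pow where "pow k = (((**) M) ^^ k) (mat 1)" for k
  define S where "S = pow ` {..N}"
  have "card S = Suc N"
    using True by (simp add: S_def N_def pow_def card_image)
  then have "\<not> independent S"
    using independent_bound[of S] by (auto simp: N_def)
  then obtain u where u: "\<exists>v\<in>S. u v \<noteq> 0" "(\<Sum>v\<in>S. u v *\<^sub>R v) = 0"
    using real_vector.dependent_finite[of S] by (auto simp: S_def)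
  define f where "f = (\<Sum>k\<le>N. monom (complex_of_real (u (pow k))) k)"
  have "poly_mat f M = (\<Sum>k\<le>N. u (pow k) *\<^sub>R pow k)"
    by (simp add: f_def pow_def poly_mat_sum poly_mat_monom mat_of_real_mult)
  also have "\<dots> = 0"
    using u(2) True by (simp add: S_def N_def pow_def sum.reindex)
  finally have "poly_mat f M = 0" .
  moreover obtain k where "k \<le> N" "u (pow k) \<noteq> 0"
    using u(1) by (auto simp: S_def)
  then have "coeff f k \<noteq> 0"
    by (simp add: f_def coeff_sum coeff_monom)
  ultimately show ?thesis
    by (metis coeff_0)
next
  case False
  then obtain a b where "a \<noteq> b" and ab: "(((**) M) ^^ a) (mat 1) = (((**) M) ^^ b) (mat 1)"
    by (auto simp: inj_on_def)
  define f :: "complex poly" where "f = monom 1 a - monom 1 b"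
  have "poly_mat f M = 0"
    using poly_mat_add[of f "monom 1 b" M] by (simp add: f_def poly_mat_monom ab)
  moreover have "coeff f a = 1"
    using \<open>a \<noteq> b\<close> by (simp add: f_def coeff_monom)
  ultimately show ?thesis
    by (metis coeff_0 zero_neq_one)
qed

lemma poly_mat_linear_factor: "poly_mat [:-r, 1:] M = M - mat r"
  by (simp add: poly_mat_pCons poly_mat_const) (simp add: mat_def vec_eq_iff)

lemma poly_mat_root_factor:
  assumes "poly f r = 0"
  obtains h where "f = [:-r, 1:] * h" "poly_mat f M = (M - mat r) ** poly_mat h M"
proof -
  obtain h where h: "f = [:-r, 1:] * h"
    using assms by (auto simp: poly_eq_0_iff_dvd elim: dvdE)
  moreover have "poly_mat f M = (M - mat r) ** poly_mat h M"
    unfolding h by (simp only: poly_mat_mult poly_mat_linear_factor)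
  ultimately show ?thesis
    by (rule that)
qed

lemma mat_eigenvalueI_kernel:
  fixes M :: "complex^'n^'n" and Y :: "complex^'m^'n"
  assumes "(M - mat s) ** Y = 0" "Y \<noteq> 0"
  shows "mat_eigenvalue M s"
proof -
  obtain j where "column j Y \<noteq> 0"
    using assms(2) by (auto simp: vec_eq_iff column_def)
  moreover have "(M - mat s) *v column j Y = 0"
    using arg_cong[OF assms(1), of "column j"]
    by (simp add: column_def matrix_vector_mult_def matrix_matrix_mult_def vec_eq_iff)
  moreover have "mat s *v v = s *s v" for v :: "complex^'n"
    by (simp add: mat_def matrix_vector_mult_def vec_eq_iff if_distrib if_distribR sum.delta
        cong: if_cong)
  ultimately show ?thesis
    unfolding mat_eigenvalue_def by (auto simp: matrix_vector_mult_diff_rdistrib)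
qed

lemma poly_mat_min_annihilator_root:
  fixes M :: "complex^'n^'n"
  assumes "f \<noteq> 0" "poly_mat f M = 0"
    and min: "\<And>g. g \<noteq> 0 \<Longrightarrow> poly_mat g M = 0 \<Longrightarrow> degree f \<le> degree g"
    and "poly f r = 0"
  shows "mat_eigenvalue M r"
proof -
  obtain h where f: "f = [:-r, 1:] * h" and "poly_mat f M = (M - mat r) ** poly_mat h M"
    using poly_mat_root_factor[OF \<open>poly f r = 0\<close>] .
  then have "(M - mat r) ** poly_mat h M = 0"
    using assms(2) by simp
  moreover have "h \<noteq> 0" "degree f = Suc (degree h)"
    using \<open>f \<noteq> 0\<close> by (auto simp: f degree_mult_eq simp del: mult_pCons_left)
  then have "poly_mat h M \<noteq> 0"
    using min[of h] by auto
  ultimately show ?thesis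
    by (rule mat_eigenvalueI_kernel)
qed

lemma poly_mat_mult_eq_0_imp_eq_0:
  fixes M :: "complex^'n^'n" and X :: "complex^'m^'n"
  assumes "g \<noteq> 0" and no_root_eigenvalue: "\<And>r. poly g r = 0 \<Longrightarrow> \<not> mat_eigenvalue M r"
    and "poly_mat g M ** X = 0"
  shows "X = 0"
  using assms
proof (induction "degree g" arbitrary: g X rule: less_induct)
  case less
  show ?case
  proof (cases "degree g = 0")
    case True
    then obtain a where g: "g = [:a:]" "a \<noteq> 0"
      using less.prems(1) by (metis degree_eq_zeroE pCons_0_0)
    have "X = mat (inverse a) ** (mat a ** X)"
      using g by (simp add: matrix_mul_assoc mat_mult_mat)
    then show ?thesis
      using less.prems(3) g by (simp add: poly_mat_const)
  next
    case False
    then obtain r where "poly g r = 0"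
      using fundamental_theorem_of_algebra[of g] constant_degree[of g] by auto
    then obtain h where g: "g = [:-r, 1:] * h" and "poly_mat g M = (M - mat r) ** poly_mat h M"
      by (rule poly_mat_root_factor)
    then have "(M - mat r) ** (poly_mat h M ** X) = 0"
      using less.prems(3) by (simp add: matrix_mul_assoc)
    then have "poly_mat h M ** X = 0"
      using less.prems(2)[OF \<open>poly g r = 0\<close>] mat_eigenvalueI_kernel by blast
    moreover have "h \<noteq> 0" "degree g = Suc (degree h)"
      using less.prems(1) by (auto simp: g degree_mult_eq simp del: mult_pCons_left)
    ultimately show ?thesis
      using less.hyps[of h X] less.prems(2) by (auto simp: g)
  qed
qed

lemma intertwiner_eq_0:
  fixes A :: "complex^'n^'n" and B :: "complex^'m^'m" and X :: "complex^'n^'m"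
  assumes intertwine: "X ** A = B ** X"
    and disjoint: "\<And>s. mat_eigenvalue A s \<Longrightarrow> \<not> mat_eigenvalue B s"
  shows "X = 0"
proof -
  obtain f where f: "f \<noteq> 0" "poly_mat f A = 0"
    and min: "\<And>g. g \<noteq> 0 \<Longrightarrow> poly_mat g A = 0 \<Longrightarrow> degree f \<le> degree g"
    using ex_has_least_nat[of "\<lambda>f. f \<noteq> 0 \<and> poly_mat f A = 0" _ degree]
      poly_mat_annihilator_exists[of A] by metis
  have "poly_mat f B ** X = X ** poly_mat f A"
    using poly_mat_intertwine[OF intertwine] by simp
  also have "\<dots> = 0"
    using f by simp
  finally have "poly_mat f B ** X = 0" .
  moreover have "\<not> mat_eigenvalue B r" if "poly f r = 0" for r
    using poly_mat_min_annihilator_root[of f A r] f min that disjoint by blast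
  ultimately show ?thesis
    using f(1) poly_mat_mult_eq_0_imp_eq_0 by blast
qed

lemma mat_eigenvalue_mat_mult:
  fixes M :: "complex^'n^'n"
  assumes "c \<noteq> 0" "mat_eigenvalue (mat c ** M) s"
  shows "mat_eigenvalue M (s / c)"
proof -
  obtain v where v: "v \<noteq> 0" "(mat c ** M) *v v = s *s v"
    using assms(2) by (auto simp: mat_eigenvalue_def)
  have "(mat c ** M) *v v = c *s (M *v v)"
    by (simp add: mat_mult_left matrix_vector_mult_def vec_eq_iff sum_distrib_left mult.assoc)
  then have "M *v v = inverse c *s (s *s v)"
    using v(2) assms(1) by (simp add: vector_smult_assoc)
  then have "M *v v = (s / c) *s v"
    by (simp add: vector_smult_assoc divide_inverse mult.commute)
  then show ?thesis
    using v(1) by (auto simp: mat_eigenvalue_def)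
qed

lemma p_restricted_not_conj_map_eigenvalue:
  fixes A0 :: "complex^'n^'n"
  assumes A0: "invertible A0" and restricted: "p_restricted p A0" and "real p \<le> cmod c" "c \<noteq> 0"
  shows "\<not> conj_map_eigenvalue A0 c"
proof
  assume "conj_map_eigenvalue A0 c"
  then obtain X where "X \<noteq> 0" and X: "matrix_inv A0 ** X ** A0 = mat c ** X"
    unfolding conj_map_eigenvalue_def mat_mult_left by blast
  have "X ** A0 = A0 ** (matrix_inv A0 ** X ** A0)"
    by (simp add: matrix_mul_assoc matrix_inv_right[OF A0])
  also have "\<dots> = (mat c ** A0) ** X"
    unfolding X by (rule trans[OF matrix_mult_mat_commute matrix_mul_assoc])
  finally have "X ** A0 = (mat c ** A0) ** X" .
  moreover have "\<not> mat_eigenvalue (mat c ** A0) s" if "mat_eigenvalue A0 s" for s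
  proof
    assume "mat_eigenvalue (mat c ** A0) s"
    then have "1 \<le> cmod (s / c)"
      using mat_eigenvalue_mat_mult \<open>c \<noteq> 0\<close> restricted by (auto simp: p_restricted_def)
    moreover have "cmod s < real p"
      using that restricted by (auto simp: p_restricted_def)
    ultimately show False
      using \<open>real p \<le> cmod c\<close> \<open>c \<noteq> 0\<close> by (simp add: norm_divide divide_le_eq)
  qed
  ultimately have "X = 0"
    by (rule intertwiner_eq_0)
  with \<open>X \<noteq> 0\<close> show False ..
qed

theorem lemma5p1:
  fixes p R :: nat
    and A :: "complex fls^'n^'n"
    and C C' :: "complex fps^'n^'n"
    and A0 A0' :: "complex^'n^'n"
  assumes "p \<ge> 2" and "R \<ge> 1"
    and "invertible A"
    and "in_I_plus_zR R C" and "in_I_plus_zR R C'"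
    and "invertible A0" and "invertible A0'"
    and "mat_map fls_const A0 =
           matrix_inv (mat_map (\<lambda>f. fps_to_fls (fps_scale (1 / of_nat p) f)) C)
             ** A ** mat_map fps_to_fls C"
    and "mat_map fls_const A0' =
           matrix_inv (mat_map (\<lambda>f. fps_to_fls (fps_scale (1 / of_nat p) f)) C')
             ** A ** mat_map fps_to_fls C'"
  shows "A0 = A0'
    \<and> ((\<forall>i\<ge>R. \<not> conj_map_eigenvalue A0 (of_nat p ^ i)) \<longrightarrow> C = C')
    \<and> (p_restricted p A0 \<longrightarrow> (\<forall>i\<ge>1. \<not> conj_map_eigenvalue A0 (of_nat p ^ i)))"
proof -
  let ?S = "mat_map (fps_scale (1 / of_nat p))" and ?K = "mat_map fps_const"
  have "A = mat_map fps_to_fls (?S C ** ?K A0 ** matrix_inv C)"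
    using gauge_equation_fls_imp_fps in_I_plus_zR_invertible assms(2,4,8) by blast
  moreover have "A = mat_map fps_to_fls (?S C' ** ?K A0' ** matrix_inv C')"
    using gauge_equation_fls_imp_fps in_I_plus_zR_invertible assms(2,5,9) by blast
  ultimately have "?S C ** ?K A0 ** matrix_inv C = ?S C' ** ?K A0' ** matrix_inv C'"
    by (simp add: vec_eq_iff)
  note unique = gauge_transform_unique[OF assms(2,4,5,6) this]
  have "\<not> conj_map_eigenvalue A0 (of_nat p ^ i)" if "p_restricted p A0" "i \<ge> 1" for i
  proof (rule p_restricted_not_conj_map_eigenvalue[OF assms(6) that(1)])
    show "real p \<le> cmod (of_nat p ^ i :: complex)"
      using assms(1) that(2) by (simp add: norm_power self_le_power)
  qed (use assms(1) in simp)
  then show ?thesis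
    using unique by blast
qed

end
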